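(* Let $\mathrm{Sample}_{m/n}$ denote Poisson subsampling of a dataset of size $n$ at rate $m/n$, and let $M$ denote the map taking the subsample indexed by $I$ to the pair $(\bar x,\bar y)$ with $\bar x=\frac1m\sum_{i\in I}x_i'+\mathcal N(0,(C_x\sigma_x/m)^2I)$, $\bar y=\frac1m\sum_{i\in I}y_i'+\mathcal N(0,(C_y\sigma_y/m)^2I)$, where $x_i'=f_1(x_i)/\max(1,\|f_1(x_i)\|_2/C_x)$ and $y_i'=y_i/\max(1,\|y_i\|_2/C_y)$ (i.e. one step of DPFMix). Then for all neighboring datasets $S,S'$ (where $S$ is obtained from $S'$ by removing one record), $$T\big(M\circ\mathrm{Sample}_{m/n}(S),\,M\circ\mathrm{Sample}_{m/n}(S')\big)\ \ge\ \tfrac{m}{n}G_{\sqrt{1/\sigma_x^2+1/\sigma_y^2}}+\big(1-\tfrac{m}{n}\big)\mathrm{Id}.$$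
   Context: Poisson subsampling at rate $p$: each index $i\in\{1,\dots,n\}$ is included independently with probability $p$. $f_1$ is a fixed feature map; $C_x,C_y,\sigma_x,\sigma_y>0$; $1\le m\le n$. For distributions $P,Q$, $T(P,Q)(\alpha)=\inf_\phi\{1-\mathbb{E}_Q[\phi]:\mathbb{E}_P[\phi]\le\alpha\}$ over rejection rules $\phi$ (the trade-off function). $G_\mu(\alpha)=\Phi(\Phi^{-1}(1-\alpha)-\mu)$ with $\Phi$ the standard normal CDF; $\mathrm{Id}(\alpha)=1-\alpha$. *)

theory Defs
  imports "HOL-Probability.Probability"
begin

definition Phi :: "real \<Rightarrow> real" where
  "Phi x = measure (density lborel std_normal_density) {..x}"

definition Phi_inv :: "real \<Rightarrow> real" where
  "Phi_inv q = (THE z. Phi z = q)"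

(* Gaussian trade-off function G_mu(alpha) = Phi(Phi^{-1}(1-alpha) - mu),
   extended to the endpoints by its limits: G_mu(0) = 1, G_mu(1) = 0. *)
definition G_tradeoff :: "real \<Rightarrow> real \<Rightarrow> real" where
  "G_tradeoff mu \<alpha> =
     (if \<alpha> \<le> 0 then 1 else if 1 \<le> \<alpha> then 0 else Phi (Phi_inv (1 - \<alpha>) - mu))"

definition tradeoff :: "'a measure \<Rightarrow> 'a measure \<Rightarrow> real \<Rightarrow> real" where
  "tradeoff P Q \<alpha> = Inf {1 - (\<integral>x. \<phi> x \<partial>Q) | \<phi>.
      \<phi> \<in> borel_measurable P \<and> (\<forall>x. 0 \<le> \<phi> x \<and> \<phi> x \<le> 1) \<and> (\<integral>x. \<phi> x \<partial>P) \<le> \<alpha>}"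

(* Isotropic Gaussian N(0, s^2 I) on a Euclidean space *)
definition gauss_vec :: "real \<Rightarrow> 'b::euclidean_space measure" where
  "gauss_vec s = distr (PiM Basis (\<lambda>_. density lborel (normal_density 0 s))) borel
                       (\<lambda>z. \<Sum>b\<in>Basis. z b *\<^sub>R b)"

definition poisson_sample :: "real \<Rightarrow> nat \<Rightarrow> nat set pmf" where
  "poisson_sample p N = map_pmf (\<lambda>b. {i. i < N \<and> b i}) (Pi_pmf {..<N} False (\<lambda>_. bernoulli_pmf p))"

definition clip :: "real \<Rightarrow> 'b::real_normed_vector \<Rightarrow> 'b" where
  "clip C v = v /\<^sub>R max 1 (norm v / C)"

definition dpfmix_step ::
  "('a \<Rightarrow> 'b::euclidean_space) \<Rightarrow> nat \<Rightarrow> real \<Rightarrow> real \<Rightarrow> real \<Rightarrow> real \<Rightarrow>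
   ('a \<times> 'c::euclidean_space) list \<Rightarrow> nat set \<Rightarrow> ('b \<times> 'c) measure" where
  "dpfmix_step f1 m Cx Cy \<sigma>x \<sigma>y D I =
     distr (gauss_vec (Cx * \<sigma>x / m) \<Otimes>\<^sub>M gauss_vec (Cy * \<sigma>y / m)) borel
       (\<lambda>(u, v). ((1 / real m) *\<^sub>R (\<Sum>i\<in>I. clip Cx (f1 (fst (D ! i)))) + u,
                  (1 / real m) *\<^sub>R (\<Sum>i\<in>I. clip Cy (snd (D ! i))) + v))"

definition dpfmix_subsampled ::
  "('a \<Rightarrow> 'b::euclidean_space) \<Rightarrow> nat \<Rightarrow> nat \<Rightarrow> real \<Rightarrow> real \<Rightarrow> real \<Rightarrow> real \<Rightarrow>
   ('a \<times> 'c::euclidean_space) list \<Rightarrow> ('b \<times> 'c) measure" where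
  "dpfmix_subsampled f1 m n Cx Cy \<sigma>x \<sigma>y D =
     measure_pmf (poisson_sample (real m / real n) (length D)) \<bind> dpfmix_step f1 m Cx Cy \<sigma>x \<sigma>y D"

end

theory Submission
  imports Defs
begin

text \<open>Given the subsample of the records of \<open>S\<close>, the output on \<open>S'\<close> is, with probability
  \<open>p = m / n\<close> (when \<open>z\<close> is sampled), the output on \<open>S\<close> shifted by \<open>d = clip z / m\<close>,
  and otherwise equal to it. So it suffices to bound the power of a test between the Gaussian noise \<open>N\<close> and
  \<open>d + N\<close>, averaged over the remaining subsample. By the Cameron--Martin formula the
  likelihood ratio of \<open>d + N\<close> against \<open>N\<close> is \<open>exp (W - V / 2)\<close>, where
  \<open>W = \<langle>d, x\<rangle>\<^sub>\<Sigma> \<sim> N(0, V)\<close> and \<open>V = \<langle>d, d\<rangle>\<^sub>\<Sigma>\<close>. Comparing with the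
  likelihood-ratio test at each threshold (Neyman--Pearson) gives bounds that are affine in the
  level, hence survive the averaging, and optimising the threshold yields \<open>1 - G\<^bsub>sqrt V\<^esub>\<close>.
  Clipping gives \<open>V \<le> 1 / \<sigma>x\<^sup>2 + 1 / \<sigma>y\<^sup>2\<close>, and \<open>G\<^sub>\<mu>\<close> decreases in \<open>\<mu>\<close>.\<close>

section \<open>The standard normal distribution function\<close>

interpretation std_normal: real_distribution "density lborel std_normal_density"
  by (simp add: real_distribution_def real_distribution_axioms_def prob_space_normal_density)

lemma Phi_eq_cdf: "Phi = cdf (density lborel std_normal_density)"
  by (simp add: Phi_def[abs_def] cdf_def)

lemma Phi_mono: "x \<le> y \<Longrightarrow> Phi x \<le> Phi y"
  unfolding Phi_eq_cdf by (rule std_normal.cdf_nondecreasing)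

lemma Phi_le_1: "Phi x \<le> 1"
  unfolding Phi_eq_cdf by (rule std_normal.cdf_bounded_prob)

lemma Phi_at_top: "(Phi \<longlongrightarrow> 1) at_top"
  unfolding Phi_eq_cdf by (rule std_normal.cdf_lim_at_top_prob)

lemma Phi_at_bot: "(Phi \<longlongrightarrow> 0) at_bot"
  unfolding Phi_eq_cdf by (rule std_normal.cdf_lim_at_bot)

lemma isCont_Phi: "isCont Phi x"
proof -
  have "emeasure (density lborel std_normal_density) {x} = 0"
    by (subst emeasure_density) (auto intro!: nn_integral_null_set)
  then show ?thesis
    unfolding Phi_eq_cdf by (simp add: std_normal.isCont_cdf measure_def)
qed

lemma Phi_strict_mono: "strict_mono Phi"
proof
  fix x y :: real assume "x < y"
  let ?M = "density lborel std_normal_density"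
  have "emeasure ?M {x<..y} = (\<integral>\<^sup>+ t. ennreal (std_normal_density t) * indicator {x<..y} t \<partial>lborel)"
    by (simp add: emeasure_density)
  also have "\<dots> \<noteq> 0"
  proof
    assume "(\<integral>\<^sup>+ t. ennreal (std_normal_density t) * indicator {x<..y} t \<partial>lborel) = 0"
    then have "AE t in lborel. ennreal (std_normal_density t) * indicator {x<..y} t = 0"
      by (simp add: nn_integral_0_iff_AE)
    moreover have "std_normal_density t \<noteq> 0" for t
      using normal_density_pos[of 1 0 t] by simp
    ultimately have "AE t in lborel. t \<notin> {x<..y}"
      by (auto elim!: eventually_mono simp: indicator_def)
    then have "{x<..y} \<in> null_sets lborel"
      by (subst AE_iff_null_sets) auto
    then have "emeasure lborel {x<..y} = 0"
      by auto
    with \<open>x < y\<close> show False by simp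
  qed
  finally have "0 < measure ?M {x<..y}"
    by (simp add: std_normal.emeasure_eq_measure zero_less_measure_iff)
  then show "Phi x < Phi y"
    unfolding Phi_eq_cdf using std_normal.cdf_diff_eq[OF \<open>x < y\<close>] by simp
qed

lemma Phi_Phi_inv:
  assumes "0 < q" "q < 1"
  shows "Phi (Phi_inv q) = q"
proof -
  obtain b where "q < Phi b"
    using order_tendstoD(1)[OF Phi_at_top \<open>q < 1\<close>] by (auto simp: eventually_at_top_linorder)
  moreover obtain a where "Phi a < q" "a \<le> b"
    using order_tendstoD(2)[OF Phi_at_bot \<open>0 < q\<close>]
    by (auto simp: eventually_at_bot_linorder intro: min.cobounded2 min.cobounded1)
  ultimately obtain z where z: "Phi z = q"
    using IVT'[of Phi a q b] isCont_Phi by (auto intro!: continuous_at_imp_continuous_on)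
  have "Phi_inv q = z"
    unfolding Phi_inv_def
    using z strict_mono_eq[OF Phi_strict_mono] by (intro the_equality) auto
  with z show ?thesis by simp
qed

lemma prob_normal_greater:
  assumes "prob_space M" and X: "distributed M lborel X (normal_density 0 \<sigma>)" and "0 < \<sigma>"
  shows "measure M {x\<in>space M. a < X x} = 1 - Phi (a / \<sigma>)"
proof -
  interpret prob_space M by fact
  have "distributed M lborel (\<lambda>x. X x / \<sigma>) std_normal_density"
    using normal_standard_normal_convert[OF \<open>0 < \<sigma>\<close>] X by simp
  then have std: "distr M lborel (\<lambda>x. X x / \<sigma>) = density lborel std_normal_density"
    and meas: "(\<lambda>x. X x / \<sigma>) \<in> measurable M lborel"
    by (auto simp: distributed_def)
  have "{x\<in>space M. a < X x} = space M - (\<lambda>x. X x / \<sigma>) -` {..a / \<sigma>} \<inter> space M"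
    using \<open>0 < \<sigma>\<close> by (auto simp: divide_le_cancel)
  moreover have "measure (distr M lborel (\<lambda>x. X x / \<sigma>)) {..a / \<sigma>}
      = prob ((\<lambda>x. X x / \<sigma>) -` {..a / \<sigma>} \<inter> space M)"
    using meas by (intro measure_distr) auto
  ultimately have "measure M {x\<in>space M. a < X x} = 1 - measure (distr M lborel (\<lambda>x. X x / \<sigma>)) {..a / \<sigma>}"
    using meas by (simp add: prob_compl measurable_sets)
  then show ?thesis
    unfolding std Phi_def .
qed

section \<open>Trade-off functions\<close>

lemma G_tradeoff_0: "0 \<le> \<alpha> \<Longrightarrow> \<alpha> \<le> 1 \<Longrightarrow> G_tradeoff 0 \<alpha> = 1 - \<alpha>"
  by (auto simp: G_tradeoff_def Phi_Phi_inv)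

lemma G_tradeoff_antimono: "\<mu> \<le> \<mu>' \<Longrightarrow> G_tradeoff \<mu>' \<alpha> \<le> G_tradeoff \<mu> \<alpha>"
  by (auto simp: G_tradeoff_def intro: Phi_mono)

lemma tradeoff_geI:
  assumes "0 \<le> \<alpha>"
    and "\<And>\<phi>. \<phi> \<in> borel_measurable P \<Longrightarrow> (\<And>x. 0 \<le> \<phi> x \<and> \<phi> x \<le> 1) \<Longrightarrow>
           (\<integral>x. \<phi> x \<partial>P) \<le> \<alpha> \<Longrightarrow> g \<le> 1 - (\<integral>x. \<phi> x \<partial>Q)"
  shows "g \<le> tradeoff P Q \<alpha>"
  unfolding tradeoff_def
proof (rule cInf_greatest)
  show "{1 - (\<integral>x. \<phi> x \<partial>Q) |\<phi>. \<phi> \<in> borel_measurable P \<and> (\<forall>x. 0 \<le> \<phi> x \<and> \<phi> x \<le> 1) \<and>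
      (\<integral>x. \<phi> x \<partial>P) \<le> \<alpha>} \<noteq> {}"
    using \<open>0 \<le> \<alpha>\<close> by (auto intro!: exI[of _ "\<lambda>_. 0"])
qed (use assms(2) in auto)

lemma (in prob_space) integral_unit_interval:
  fixes f :: "'a \<Rightarrow> real"
  assumes "f \<in> borel_measurable M" "\<And>x. 0 \<le> f x \<and> f x \<le> 1"
  shows "0 \<le> (\<integral>x. f x \<partial>M)" "(\<integral>x. f x \<partial>M) \<le> 1"
proof -
  have "integrable M f"
    using assms by (intro integrable_const_bound[where B = 1]) auto
  then show "0 \<le> (\<integral>x. f x \<partial>M)" "(\<integral>x. f x \<partial>M) \<le> 1"
    using assms(2) by (auto intro!: integral_nonneg_AE integral_le_const)
qed

text \<open>The right-hand sides are the bounds obtained from the likelihood-ratio test with threshold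
  \<open>exp (t - V / 2)\<close> between \<open>N(0, 1)\<close> and \<open>N(sqrt V, 1)\<close>; optimising over \<open>t\<close>
  yields the Gaussian trade-off curve.\<close>
lemma le_1_minus_G_tradeoff_if_threshold_bounds:
  assumes "0 < V" "0 \<le> a" "a \<le> \<alpha>" "\<alpha> \<le> 1" "e \<le> 1"
    and bound: "\<And>t. e \<le> exp (t - V / 2) * a + (1 - Phi ((t - V) / sqrt V))
                        - exp (t - V / 2) * (1 - Phi (t / sqrt V))"
  shows "e \<le> 1 - G_tradeoff (sqrt V) \<alpha>"
proof -
  have bound': "e \<le> exp (t - V / 2) * (a - \<alpha>) + (1 - Phi ((t - V) / sqrt V))
                  + exp (t - V / 2) * (Phi (t / sqrt V) - (1 - \<alpha>))" for t
    using bound[of t] by (simp add: algebra_simps)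
  consider "\<alpha> = 0" | "\<alpha> = 1" | "0 < \<alpha>" "\<alpha> < 1"
    using assms by linarith
  then show ?thesis
  proof cases
    case 1
    have tail: "e \<le> 1 - Phi ((t - V) / sqrt V)" for t
    proof -
      have "exp (t - V / 2) * (Phi (t / sqrt V) - 1) \<le> 0"
        by (intro mult_nonneg_nonpos) (simp_all add: Phi_le_1)
      then show ?thesis
        using bound'[of t] 1 \<open>0 \<le> a\<close> \<open>a \<le> \<alpha>\<close> by simp
    qed
    have "e \<le> 1 - Phi y" for y
      using tail[of "V + sqrt V * y"] \<open>0 < V\<close> by simp
    then have "e \<le> 0"
      using Phi_at_top by (intro tendsto_lowerbound[of "\<lambda>y. 1 - Phi y" _ at_top])
        (auto intro!: tendsto_eq_intros always_eventually)
    then show ?thesis using 1 by (simp add: G_tradeoff_def)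
  next
    case 2
    then show ?thesis using \<open>e \<le> 1\<close> by (simp add: G_tradeoff_def)
  next
    case 3
    define q where "q = Phi_inv (1 - \<alpha>)"
    have q: "Phi q = 1 - \<alpha>"
      unfolding q_def using 3 by (intro Phi_Phi_inv) auto
    have "(sqrt V * q - V) / sqrt V = q - sqrt V"
      using \<open>0 < V\<close> by (simp add: field_simps real_div_sqrt)
    moreover have "exp (sqrt V * q - V / 2) * (a - \<alpha>) \<le> 0"
      using \<open>a \<le> \<alpha>\<close> by (intro mult_nonneg_nonpos) auto
    ultimately have "e \<le> 1 - Phi (q - sqrt V)"
      using bound'[of "sqrt V * q"] \<open>0 < V\<close> q by simp
    then show ?thesis
      using 3 by (simp add: G_tradeoff_def q_def)
  qed
qed

section \<open>Isotropic Gaussian vectors\<close>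

definition iso_normal_density :: "real \<Rightarrow> 'b::euclidean_space \<Rightarrow> real" where
  "iso_normal_density s u = (\<Prod>b\<in>Basis. normal_density 0 s (u \<bullet> b))"

lemma iso_normal_density_nonneg: "0 \<le> iso_normal_density s u"
  by (simp add: iso_normal_density_def prod_nonneg)

lemma borel_measurable_iso_normal_density[measurable]: "iso_normal_density s \<in> borel_measurable borel"
  unfolding iso_normal_density_def[abs_def] by measurable

lemma PiM_normal_density:
  fixes I :: "'i set"
  assumes "finite I" "0 < s"
  shows "PiM I (\<lambda>_. density lborel (normal_density 0 s)) =
         density (PiM I (\<lambda>_. lborel)) (\<lambda>z. \<Prod>i\<in>I. normal_density 0 s (z i))"
proof -
  let ?D = "density lborel (\<lambda>x. ennreal (normal_density 0 s x))"
  interpret D: prob_space ?D using \<open>0 < s\<close> by (rule prob_space_normal_density)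
  interpret PD: product_sigma_finite "\<lambda>_::'i. ?D" by standard
  interpret PL: product_sigma_finite "\<lambda>_::'i. lborel :: real measure" by standard
  show ?thesis
  proof (rule PD.PiM_eqI[symmetric])
    fix A assume A: "\<And>i. i \<in> I \<Longrightarrow> A i \<in> sets ?D"
    then have A': "\<And>i. i \<in> I \<Longrightarrow> A i \<in> sets borel" by simp
    have "emeasure (density (PiM I (\<lambda>_. lborel)) (\<lambda>z. \<Prod>i\<in>I. normal_density 0 s (z i))) (Pi\<^sub>E I A)
       = (\<integral>\<^sup>+z. ennreal (\<Prod>i\<in>I. normal_density 0 s (z i)) * indicator (Pi\<^sub>E I A) z \<partial>PiM I (\<lambda>_. lborel))"
      using A' \<open>finite I\<close> by (intro emeasure_density) (auto intro!: sets_PiM_I_finite)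
    also have "\<dots> = (\<integral>\<^sup>+z. (\<Prod>i\<in>I. ennreal (normal_density 0 s (z i)) * indicator (A i) (z i)) \<partial>PiM I (\<lambda>_. lborel))"
    proof (intro nn_integral_cong)
      fix z assume "z \<in> space (PiM I (\<lambda>_. lborel :: real measure))"
      then have "indicator (Pi\<^sub>E I A) z = (\<Prod>i\<in>I. indicator (A i) (z i) :: ennreal)"
        using \<open>finite I\<close> by (auto simp: indicator_def space_PiM PiE_iff)
      then show "ennreal (\<Prod>i\<in>I. normal_density 0 s (z i)) * indicator (Pi\<^sub>E I A) z =
          (\<Prod>i\<in>I. ennreal (normal_density 0 s (z i)) * indicator (A i) (z i))"
        by (simp add: prod.distrib prod_ennreal)
    qed
    also have "\<dots> = (\<Prod>i\<in>I. \<integral>\<^sup>+x. ennreal (normal_density 0 s x) * indicator (A i) x \<partial>lborel)"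
      using A' \<open>finite I\<close> by (intro PL.product_nn_integral_prod) auto
    also have "\<dots> = (\<Prod>i\<in>I. emeasure ?D (A i))"
      using A' by (intro prod.cong refl) (simp add: emeasure_density)
    finally show "emeasure (density (PiM I (\<lambda>_. lborel)) (\<lambda>z. \<Prod>i\<in>I. normal_density 0 s (z i))) (Pi\<^sub>E I A)
       = (\<Prod>i\<in>I. emeasure ?D (A i))" .
  qed (use \<open>finite I\<close> in \<open>auto intro!: sets_PiM_cong simp del: sets_lborel\<close>)
qed

lemma gauss_vec_eq_density:
  assumes "0 < s"
  shows "gauss_vec s = (density lborel (iso_normal_density s) :: 'b::euclidean_space measure)"
proof -
  let ?P = "PiM (Basis::'b set) (\<lambda>_. lborel :: real measure)"
  let ?E = "\<lambda>f. \<Sum>b\<in>(Basis::'b set). f b *\<^sub>R b"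
  have "density lborel (iso_normal_density s) = density (distr ?P borel ?E) (iso_normal_density s)"
    by (subst lborel_eq) rule
  also have "\<dots> = distr (density ?P (\<lambda>z. iso_normal_density s (?E z))) borel ?E"
    by (intro density_distr) auto
  also have "density ?P (\<lambda>z. iso_normal_density s (?E z)) = density ?P (\<lambda>z. \<Prod>b\<in>Basis. normal_density 0 s (z b))"
    by (intro density_cong) (auto simp: iso_normal_density_def inner_sum_left inner_Basis if_distrib cong: if_cong)
  also have "\<dots> = PiM Basis (\<lambda>_. density lborel (normal_density 0 s))"
    using \<open>0 < s\<close> by (simp add: PiM_normal_density)
  finally show ?thesis
    unfolding gauss_vec_def by simp
qed

lemma prob_space_gauss_vec: "0 < s \<Longrightarrow> prob_space (gauss_vec s)"
  unfolding gauss_vec_def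
  by (intro prob_space.prob_space_distr prob_space_PiM prob_space_normal_density) auto

lemma sets_gauss_vec[simp, measurable_cong]: "sets (gauss_vec s) = sets borel"
  by (simp add: gauss_vec_def)

lemma space_gauss_vec[simp]: "space (gauss_vec s) = UNIV"
  using sets_eq_imp_space_eq[OF sets_gauss_vec[of s]] by simp

lemma normal_density_shift:
  assumes "0 < s"
  shows "normal_density 0 s (x - a) = normal_density 0 s x * exp (a * x / s\<^sup>2 - a\<^sup>2 / (2 * s\<^sup>2))"
proof -
  have "exp (- (x - a)\<^sup>2 / (2 * s\<^sup>2)) = exp (- x\<^sup>2 / (2 * s\<^sup>2)) * exp (a * x / s\<^sup>2 - a\<^sup>2 / (2 * s\<^sup>2))"
    unfolding exp_add[symmetric] using \<open>0 < s\<close> by (simp add: field_simps power2_eq_square)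
  then show ?thesis
    unfolding normal_density_def by simp
qed

lemma iso_normal_density_shift:
  fixes u \<delta> :: "'b::euclidean_space"
  assumes "0 < s"
  shows "iso_normal_density s (u - \<delta>) = iso_normal_density s u * exp ((\<delta> \<bullet> u) / s\<^sup>2 - (\<delta> \<bullet> \<delta>) / (2 * s\<^sup>2))"
proof -
  have "iso_normal_density s (u - \<delta>)
      = iso_normal_density s u * exp (\<Sum>b\<in>Basis. (\<delta> \<bullet> b) * (u \<bullet> b) / s\<^sup>2 - (\<delta> \<bullet> b)\<^sup>2 / (2 * s\<^sup>2))"
    by (simp add: iso_normal_density_def inner_diff_left normal_density_shift[OF \<open>0 < s\<close>]
        prod.distrib exp_sum)
  also have "(\<Sum>b\<in>Basis. (\<delta> \<bullet> b) * (u \<bullet> b) / s\<^sup>2 - (\<delta> \<bullet> b)\<^sup>2 / (2 * s\<^sup>2))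
      = (\<Sum>b\<in>Basis. (\<delta> \<bullet> b) * (u \<bullet> b)) / s\<^sup>2 - (\<Sum>b\<in>Basis. (\<delta> \<bullet> b) * (\<delta> \<bullet> b)) / (2 * s\<^sup>2)"
    by (simp add: sum_subtractf sum_divide_distrib power2_eq_square)
  finally show ?thesis
    by (simp add: euclidean_inner[symmetric])
qed

lemma indep_vars_PiM_components:
  assumes "prob_space M" "I \<noteq> {}"
  shows "prob_space.indep_vars (PiM I (\<lambda>_. M)) (\<lambda>_. M) (\<lambda>i x. x i) I"
proof -
  interpret P: prob_space "PiM I (\<lambda>_. M)"
    using assms(1) by (rule prob_space_PiM)
  have "distr (PiM I (\<lambda>_. M)) (PiM I (\<lambda>_. M)) (\<lambda>x. \<lambda>i\<in>I. x i) = PiM I (\<lambda>_. M)"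
    by (subst distr_cong[where g = "\<lambda>x. x"]) (auto simp: space_PiM distr_id2)
  also have "\<dots> = PiM I (\<lambda>i. distr (PiM I (\<lambda>_. M)) M (\<lambda>x. x i))"
    using assms(1) by (intro PiM_cong refl distr_PiM_component[symmetric])
  finally show ?thesis
    using assms(2) by (subst P.indep_vars_iff_distr_eq_PiM') auto
qed

lemma distributed_inner_gauss_vec:
  fixes w :: "'b::euclidean_space"
  assumes "0 < s" "w \<noteq> 0"
  shows "distributed (gauss_vec s) lborel (\<lambda>u. w \<bullet> u) (normal_density 0 (s * norm w))"
proof -
  define D where "D = density lborel (\<lambda>x. ennreal (normal_density 0 s x))"
  define P where "P = PiM (Basis::'b set) (\<lambda>_. D)"
  have psD: "prob_space D"
    unfolding D_def using \<open>0 < s\<close> by (rule prob_space_normal_density)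
  have [simp, measurable_cong]: "sets D = sets borel"
    by (simp add: D_def)
  interpret P: prob_space P
    unfolding P_def by (intro prob_space_PiM psD)
  have coord: "distributed P lborel (\<lambda>z. z b) (normal_density 0 s)" if "b \<in> Basis" for b
  proof -
    have "distr P lborel (\<lambda>z. z b) = distr P D (\<lambda>z. z b)"
      by (intro distr_cong) auto
    also have "\<dots> = D"
      unfolding P_def using psD that by (rule distr_PiM_component)
    finally show ?thesis
      using that by (auto simp: distributed_def D_def P_def measurable_cong_sets[OF refl sets_lborel])
  qed
  have indep: "P.indep_vars (\<lambda>_. D) (\<lambda>b z. z b) Basis"
    unfolding P_def using psD by (rule indep_vars_PiM_components) simp
  define B where "B = {b\<in>(Basis::'b set). w \<bullet> b \<noteq> 0}"
  have "B \<noteq> {}"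
    using \<open>w \<noteq> 0\<close> euclidean_all_zero_iff[of w] by (auto simp: B_def)
  have "distributed P lborel (\<lambda>z. \<Sum>b\<in>B. (w \<bullet> b) * z b)
      (normal_density (\<Sum>b\<in>B. 0) (sqrt (\<Sum>b\<in>B. (\<bar>w \<bullet> b\<bar> * s)\<^sup>2)))"
  proof (rule P.sum_indep_normal)
    show "P.indep_vars (\<lambda>_. borel) (\<lambda>b z. (w \<bullet> b) * z b) B"
      by (rule P.indep_vars_compose2[OF P.indep_vars_subset[OF indep]]) (auto simp: B_def)
    show "distributed P lborel (\<lambda>z. (w \<bullet> b) * z b) (normal_density 0 (\<bar>w \<bullet> b\<bar> * s))" if "b \<in> B" for b
      using P.normal_density_affine[OF coord \<open>0 < s\<close>, of b "w \<bullet> b" 0] that by (auto simp: B_def)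
  qed (use \<open>B \<noteq> {}\<close> \<open>0 < s\<close> in \<open>auto simp: B_def\<close>)
  moreover have "(\<Sum>b\<in>B. (\<bar>w \<bullet> b\<bar> * s)\<^sup>2) = (s * norm w)\<^sup>2"
  proof -
    have "(\<Sum>b\<in>B. (\<bar>w \<bullet> b\<bar> * s)\<^sup>2) = s\<^sup>2 * (\<Sum>b\<in>Basis. (w \<bullet> b)\<^sup>2)"
      by (subst sum.mono_neutral_left[of Basis]) (auto simp: B_def sum_distrib_left power_mult_distrib mult.commute)
    also have "(\<Sum>b\<in>Basis. (w \<bullet> b)\<^sup>2) = (norm w)\<^sup>2"
      by (simp add: euclidean_inner[of w w, symmetric] power2_norm_eq_inner[symmetric] power2_eq_square)
    finally show ?thesis
      by (simp add: power_mult_distrib)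
  qed
  moreover have "(\<Sum>b\<in>B. (w \<bullet> b) * z b) = w \<bullet> (\<Sum>b\<in>Basis. z b *\<^sub>R b)" for z
    by (subst sum.mono_neutral_left[of Basis]) (auto simp: B_def inner_sum_right mult.commute)
  ultimately have "distributed P lborel (\<lambda>z. w \<bullet> (\<Sum>b\<in>Basis. z b *\<^sub>R b)) (normal_density 0 (s * norm w))"
    using \<open>0 < s\<close> by simp
  moreover have "(\<lambda>f. \<Sum>b\<in>Basis. f b *\<^sub>R b) \<in> P \<rightarrow>\<^sub>M (borel :: 'b measure)"
    unfolding P_def by measurable
  ultimately show ?thesis
    unfolding distributed_def gauss_vec_def P_def[symmetric] D_def[symmetric]
    by (auto simp: distr_distr comp_def measurable_cong_sets[OF refl sets_lborel])
qed

section \<open>Products of probability spaces\<close>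

lemma measurable_fst_borel[measurable]:
  "(fst :: 'a::topological_space \<times> 'b::topological_space \<Rightarrow> 'a) \<in> borel \<rightarrow>\<^sub>M borel"
  by (intro borel_measurable_continuous_onI continuous_intros)

lemma measurable_snd_borel[measurable]:
  "(snd :: 'a::topological_space \<times> 'b::topological_space \<Rightarrow> 'b) \<in> borel \<rightarrow>\<^sub>M borel"
  by (intro borel_measurable_continuous_onI continuous_intros)

lemma (in prob_space) distr_pair_snd: "prob_space N \<Longrightarrow> distr (N \<Otimes>\<^sub>M M) M snd = M"
proof (intro measure_eqI)
  assume "prob_space N"
  then interpret N: prob_space N .
  fix A assume "A \<in> sets (distr (N \<Otimes>\<^sub>M M) M snd)"
  then have A: "A \<in> sets M" by simp
  then have "emeasure (distr (N \<Otimes>\<^sub>M M) M snd) A = emeasure (N \<Otimes>\<^sub>M M) (space N \<times> A)"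
    by (auto simp: emeasure_distr space_pair_measure dest: sets.sets_into_space
        intro!: arg_cong2[where f = emeasure])
  also have "\<dots> = emeasure M A"
    using A by (simp add: emeasure_pair_measure_Times N.emeasure_space_1)
  finally show "emeasure (distr (N \<Otimes>\<^sub>M M) M snd) A = emeasure M A" .
qed simp

lemma distributed_comp_fst:
  assumes "prob_space M2" "distributed M1 lborel f g"
  shows "distributed (M1 \<Otimes>\<^sub>M M2) lborel (\<lambda>x. f (fst x)) g"
proof -
  interpret M2: prob_space M2 by fact
  have f: "f \<in> M1 \<rightarrow>\<^sub>M lborel"
    using assms(2) by (simp add: distributed_def)
  have "distr (M1 \<Otimes>\<^sub>M M2) lborel (\<lambda>x. f (fst x)) = distr (distr (M1 \<Otimes>\<^sub>M M2) M1 fst) lborel f"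
    using f by (subst distr_distr) (auto simp: comp_def)
  then show ?thesis
    using assms(2) measurable_compose[OF measurable_fst f] by (simp add: distributed_def M2.distr_pair_fst)
qed

lemma distributed_comp_snd:
  assumes "prob_space M1" "prob_space M2" "distributed M2 lborel f g"
  shows "distributed (M1 \<Otimes>\<^sub>M M2) lborel (\<lambda>x. f (snd x)) g"
proof -
  have f: "f \<in> M2 \<rightarrow>\<^sub>M lborel"
    using assms(3) by (simp add: distributed_def)
  have "distr (M1 \<Otimes>\<^sub>M M2) lborel (\<lambda>x. f (snd x)) = distr (distr (M1 \<Otimes>\<^sub>M M2) M2 snd) lborel f"
    using f by (subst distr_distr) (auto simp: comp_def)
  then show ?thesis
    using assms measurable_compose[OF measurable_snd f] by (simp add: distributed_def prob_space.distr_pair_snd)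
qed

lemma indep_var_comp_fst_snd:
  assumes "prob_space M1" "prob_space M2" "X \<in> M1 \<rightarrow>\<^sub>M borel" "Y \<in> M2 \<rightarrow>\<^sub>M borel"
  shows "prob_space.indep_var (M1 \<Otimes>\<^sub>M M2) borel (\<lambda>x. X (fst x)) borel (\<lambda>x. Y (snd x))"
proof -
  interpret M1: prob_space M1 by fact
  interpret M2: prob_space M2 by fact
  interpret P: pair_prob_space M1 M2 ..
  have "sigma_finite_measure (distr M2 borel Y)"
    by (intro prob_space_imp_sigma_finite M2.prob_space_distr assms)
  moreover have "distr (M1 \<Otimes>\<^sub>M M2) borel (\<lambda>x. X (fst x)) = distr M1 borel X"
    using assms(3) by (subst distr_distr[symmetric, of _ M1, simplified comp_def]) (auto simp: M2.distr_pair_fst)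
  moreover have "distr (M1 \<Otimes>\<^sub>M M2) borel (\<lambda>x. Y (snd x)) = distr M2 borel Y"
    using assms(4) by (subst distr_distr[symmetric, of _ M2, simplified comp_def])
      (auto simp: M2.distr_pair_snd assms(1))
  ultimately show ?thesis
    using assms(3,4)
    by (subst P.indep_var_distribution_eq) (auto simp: pair_measure_distr intro!: distr_cong)
qed

section \<open>Pairs of Gaussian vectors\<close>

text \<open>The inner product \<open>\<langle>d, x\<rangle>\<^sub>\<Sigma> = d\<^sup>T \<Sigma>\<inverse> x\<close> for the covariance
  \<open>\<Sigma> = diag (s1\<^sup>2 I, s2\<^sup>2 I)\<close> of \<open>gauss_vec s1 \<Otimes>\<^sub>M gauss_vec s2\<close>.\<close>
definition mahalanobis_inner :: "real \<Rightarrow> real \<Rightarrow> 'b::euclidean_space \<times> 'c::euclidean_space \<Rightarrow> 'b \<times> 'c \<Rightarrow> real" where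
  "mahalanobis_inner s1 s2 d x = (fst d \<bullet> fst x) / s1\<^sup>2 + (snd d \<bullet> snd x) / s2\<^sup>2"

lemma mahalanobis_inner_add_right:
  "mahalanobis_inner s1 s2 d (x + y) = mahalanobis_inner s1 s2 d x + mahalanobis_inner s1 s2 d y"
  by (simp add: mahalanobis_inner_def inner_add_right add_divide_distrib)

lemma mahalanobis_inner_self_pos: "0 < s1 \<Longrightarrow> 0 < s2 \<Longrightarrow> d \<noteq> 0 \<Longrightarrow> 0 < mahalanobis_inner s1 s2 d d"
  by (cases d) (auto simp: mahalanobis_inner_def zero_prod_def add_pos_nonneg add_nonneg_pos)

lemma borel_measurable_mahalanobis_inner[measurable]: "mahalanobis_inner s1 s2 d \<in> borel_measurable borel"
  unfolding mahalanobis_inner_def[abs_def] by measurable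

lemma mahalanobis_inner_self_le:
  assumes "0 < s1" "0 < s2" "norm (fst d) \<le> c1" "norm (snd d) \<le> c2"
  shows "mahalanobis_inner s1 s2 d d \<le> (c1 / s1)\<^sup>2 + (c2 / s2)\<^sup>2"
proof -
  have "mahalanobis_inner s1 s2 d d = (norm (fst d) / s1)\<^sup>2 + (norm (snd d) / s2)\<^sup>2"
    by (simp add: mahalanobis_inner_def power_divide power2_norm_eq_inner)
  also have "\<dots> \<le> (c1 / s1)\<^sup>2 + (c2 / s2)\<^sup>2"
    using assms by (intro add_mono power_mono divide_right_mono) auto
  finally show ?thesis .
qed

lemma sets_gauss_pair[simp, measurable_cong]:
  "sets (gauss_vec s1 \<Otimes>\<^sub>M gauss_vec s2 :: ('b::euclidean_space \<times> 'c::euclidean_space) measure) = sets borel"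
  unfolding borel_prod[symmetric] by (rule sets_pair_measure_cong) auto

lemma measurable_add_gauss_pair[measurable]:
  "(+) c \<in> (gauss_vec s1 \<Otimes>\<^sub>M gauss_vec s2 :: ('b::euclidean_space \<times> 'c::euclidean_space) measure) \<rightarrow>\<^sub>M borel"
  unfolding measurable_cong_sets[OF sets_gauss_pair refl]
  by (intro borel_measurable_continuous_onI continuous_intros)

lemma prob_space_gauss_pair: "0 < s1 \<Longrightarrow> 0 < s2 \<Longrightarrow> prob_space (gauss_vec s1 \<Otimes>\<^sub>M gauss_vec s2)"
  by (intro prob_space_pair prob_space_gauss_vec)

lemma gauss_pair_eq_density:
  assumes "0 < s1" "0 < s2"
  shows "(gauss_vec s1 \<Otimes>\<^sub>M gauss_vec s2 :: ('b::euclidean_space \<times> 'c::euclidean_space) measure)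
    = density lborel (\<lambda>x. iso_normal_density s1 (fst x) * iso_normal_density s2 (snd x))"
proof -
  have "sigma_finite_measure (gauss_vec s2 :: 'c measure)"
    using assms by (intro prob_space_imp_sigma_finite prob_space_gauss_vec)
  then have "sigma_finite_measure (density lborel (iso_normal_density s2) :: 'c measure)"
    using assms by (simp add: gauss_vec_eq_density)
  then have "(density lborel (iso_normal_density s1) \<Otimes>\<^sub>M density lborel (iso_normal_density s2) :: ('b \<times> 'c) measure)
      = density (lborel \<Otimes>\<^sub>M lborel) (\<lambda>(x, y). ennreal (iso_normal_density s1 x) * ennreal (iso_normal_density s2 y))"
    by (intro pair_measure_density) (auto simp: lborel.sigma_finite_measure_axioms)
  then show ?thesis
    using assms unfolding lborel_prod
    by (auto simp: gauss_vec_eq_density ennreal_mult iso_normal_density_nonneg intro!: density_cong)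
qed

text \<open>Cameron--Martin formula: the shifted Gaussian has density
  \<open>exp (\<langle>d, x\<rangle>\<^sub>\<Sigma> - \<langle>d, d\<rangle>\<^sub>\<Sigma> / 2)\<close> with respect to the centred one.\<close>
lemma gauss_pair_shift:
  fixes d :: "'b::euclidean_space \<times> 'c::euclidean_space"
  assumes "0 < s1" "0 < s2"
  defines "N \<equiv> gauss_vec s1 \<Otimes>\<^sub>M gauss_vec s2"
  shows "distr N borel ((+) d)
    = density N (\<lambda>x. exp (mahalanobis_inner s1 s2 d x - mahalanobis_inner s1 s2 d d / 2))"
proof -
  define n where "n x = iso_normal_density s1 (fst x) * iso_normal_density s2 (snd x)" for x :: "'b \<times> 'c"
  define L where "L x = exp (mahalanobis_inner s1 s2 d x - mahalanobis_inner s1 s2 d d / 2)" for x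
  have [measurable]: "n \<in> borel_measurable borel"
    unfolding n_def[abs_def] by measurable
  have N: "N = density lborel n"
    unfolding N_def n_def by (rule gauss_pair_eq_density[OF assms(1,2)])
  have "n (y - d) = n y * L y" for y
    using assms by (cases d) (simp add: n_def L_def mahalanobis_inner_def iso_normal_density_shift
        exp_add[symmetric] field_simps)
  then have "ennreal (n (y - d)) = ennreal (n y) * ennreal (L y)" for y
    by (simp add: ennreal_mult n_def L_def iso_normal_density_nonneg)
  then have "density lborel (\<lambda>y. n (y - d)) = density N L"
    unfolding N by (subst density_density_eq) (auto simp: L_def)
  moreover have "density lborel (\<lambda>y. n (y - d)) = density (distr lborel borel ((+) d)) (\<lambda>y. n (y - d))"
    by (simp add: lborel_distr_plus)
  moreover have "\<dots> = distr N borel ((+) d)"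
    unfolding N by (subst density_distr) auto
  ultimately show ?thesis
    by (simp add: L_def)
qed

lemma distributed_mahalanobis_inner:
  fixes d :: "'b::euclidean_space \<times> 'c::euclidean_space"
  assumes "0 < s1" "0 < s2" "d \<noteq> 0"
  shows "distributed (gauss_vec s1 \<Otimes>\<^sub>M gauss_vec s2) lborel (mahalanobis_inner s1 s2 d)
           (normal_density 0 (sqrt (mahalanobis_inner s1 s2 d d)))"
proof -
  obtain d1 d2 where d: "d = (d1, d2)" by (cases d)
  define N where "N = (gauss_vec s1 \<Otimes>\<^sub>M gauss_vec s2 :: ('b \<times> 'c) measure)"
  have p1: "prob_space (gauss_vec s1 :: 'b measure)" and p2: "prob_space (gauss_vec s2 :: 'c measure)"
    using assms by (simp_all add: prob_space_gauss_vec)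
  define w1 where "w1 = (1 / s1\<^sup>2) *\<^sub>R d1"
  define w2 where "w2 = (1 / s2\<^sup>2) *\<^sub>R d2"
  have M_eq: "mahalanobis_inner s1 s2 d = (\<lambda>x. w1 \<bullet> fst x + w2 \<bullet> snd x)"
    by (auto simp: mahalanobis_inner_def w1_def w2_def d)
  have sd1: "s1 * norm w1 = norm d1 / s1" and sd2: "s2 * norm w2 = norm d2 / s2"
    using assms by (simp_all add: w1_def w2_def power2_eq_square)
  have V: "mahalanobis_inner s1 s2 d d = (s1 * norm w1)\<^sup>2 + (s2 * norm w2)\<^sup>2"
    by (simp add: mahalanobis_inner_def d sd1 sd2 power_divide power2_norm_eq_inner)
  have X: "distributed N lborel (\<lambda>x. w1 \<bullet> fst x) (normal_density 0 (s1 * norm w1))"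
    if "d1 \<noteq> 0"
    unfolding N_def using that assms
    by (intro distributed_comp_fst p2 distributed_inner_gauss_vec) (auto simp: w1_def)
  have Y: "distributed N lborel (\<lambda>x. w2 \<bullet> snd x) (normal_density 0 (s2 * norm w2))"
    if "d2 \<noteq> 0"
    unfolding N_def using that assms
    by (intro distributed_comp_snd p1 p2 distributed_inner_gauss_vec) (auto simp: w2_def)
  consider "d1 = 0" "d2 \<noteq> 0" | "d1 \<noteq> 0" "d2 = 0" | "d1 \<noteq> 0" "d2 \<noteq> 0"
    using \<open>d \<noteq> 0\<close> d by (auto simp: zero_prod_def)
  then have "distributed N lborel (\<lambda>x. w1 \<bullet> fst x + w2 \<bullet> snd x)
      (normal_density 0 (sqrt ((s1 * norm w1)\<^sup>2 + (s2 * norm w2)\<^sup>2)))"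
  proof cases
    case 1
    then show ?thesis
      using Y assms by (simp add: w1_def)
  next
    case 2
    then show ?thesis
      using X assms by (simp add: w2_def)
  next
    case 3
    interpret N: prob_space N
      unfolding N_def using assms(1,2) by (rule prob_space_gauss_pair)
    have "N.indep_var borel (\<lambda>x. w1 \<bullet> fst x) borel (\<lambda>x. w2 \<bullet> snd x)"
      unfolding N_def
      by (intro indep_var_comp_fst_snd p1 p2) (auto simp: measurable_cong_sets[OF sets_gauss_vec refl])
    from N.add_indep_normal[OF this _ _ X Y] 3 assms show ?thesis
      by (simp add: w1_def w2_def)
  qed
  then show ?thesis
    unfolding N_def M_eq[symmetric] V[symmetric] .
qed

lemma prob_mahalanobis_inner_greater:
  fixes d :: "'b::euclidean_space \<times> 'c::euclidean_space"
  assumes "0 < s1" "0 < s2" "d \<noteq> 0"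
  shows "measure (gauss_vec s1 \<Otimes>\<^sub>M gauss_vec s2) {x. a < mahalanobis_inner s1 s2 d x}
           = 1 - Phi (a / sqrt (mahalanobis_inner s1 s2 d d))"
proof -
  have "0 < sqrt (mahalanobis_inner s1 s2 d d)"
    using assms by (simp add: mahalanobis_inner_self_pos)
  from prob_normal_greater[OF prob_space_gauss_pair distributed_mahalanobis_inner this] assms
  show ?thesis
    by (simp add: space_pair_measure)
qed

lemma prob_shifted_mahalanobis_inner_greater:
  fixes d :: "'b::euclidean_space \<times> 'c::euclidean_space"
  assumes "0 < s1" "0 < s2" "d \<noteq> 0"
  shows "(\<integral>x. indicator {y. a < mahalanobis_inner s1 s2 d y} (d + x) \<partial>gauss_vec s1 \<Otimes>\<^sub>M gauss_vec s2)
           = 1 - Phi ((a - mahalanobis_inner s1 s2 d d) / sqrt (mahalanobis_inner s1 s2 d d))"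
proof -
  interpret N: prob_space "gauss_vec s1 \<Otimes>\<^sub>M gauss_vec s2 :: ('b \<times> 'c) measure"
    using assms(1,2) by (rule prob_space_gauss_pair)
  have "indicator {y. a < mahalanobis_inner s1 s2 d y} (d + x)
      = (indicator {y. a - mahalanobis_inner s1 s2 d d < mahalanobis_inner s1 s2 d y} x :: real)" for x
    by (simp add: indicator_def mahalanobis_inner_add_right)
  moreover have "{y. a - mahalanobis_inner s1 s2 d d < mahalanobis_inner s1 s2 d y} \<in> sets borel"
    by measurable
  ultimately show ?thesis
    using prob_mahalanobis_inner_greater[OF assms] by (simp add: space_pair_measure)
qed

section \<open>Testing a shifted Gaussian\<close>

lemma integral_gauss_pair_shift:
  fixes d :: "'b::euclidean_space \<times> 'c::euclidean_space" and f :: "'b \<times> 'c \<Rightarrow> real"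
  assumes "0 < s1" "0 < s2" "f \<in> borel_measurable borel"
  defines "N \<equiv> gauss_vec s1 \<Otimes>\<^sub>M gauss_vec s2"
  shows "(\<integral>x. f (d + x) \<partial>N)
    = (\<integral>x. exp (mahalanobis_inner s1 s2 d x - mahalanobis_inner s1 s2 d d / 2) * f x \<partial>N)"
proof -
  have "(\<integral>x. f (d + x) \<partial>N) = (\<integral>x. f x \<partial>distr N borel ((+) d))"
    unfolding N_def using assms(3) by (simp add: integral_distr)
  also have "\<dots> = (\<integral>x. exp (mahalanobis_inner s1 s2 d x - mahalanobis_inner s1 s2 d d / 2) * f x \<partial>N)"
    unfolding N_def gauss_pair_shift[OF assms(1,2)]
    using assms(3) by (subst integral_density) (auto simp: measurable_cong_sets[OF sets_gauss_pair refl])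
  finally show ?thesis .
qed

lemma integrable_gauss_pair_shift:
  fixes d :: "'b::euclidean_space \<times> 'c::euclidean_space" and f :: "'b \<times> 'c \<Rightarrow> real"
  assumes "0 < s1" "0 < s2" "f \<in> borel_measurable borel" "\<And>x. \<bar>f x\<bar> \<le> B"
  shows "integrable (gauss_vec s1 \<Otimes>\<^sub>M gauss_vec s2)
    (\<lambda>x. exp (mahalanobis_inner s1 s2 d x - mahalanobis_inner s1 s2 d d / 2) * f x)"
proof -
  interpret Q: prob_space "distr (gauss_vec s1 \<Otimes>\<^sub>M gauss_vec s2) borel ((+) d)"
    using assms(1,2) by (intro prob_space.prob_space_distr prob_space_gauss_pair measurable_add_gauss_pair)
  have "integrable (distr (gauss_vec s1 \<Otimes>\<^sub>M gauss_vec s2) borel ((+) d)) f"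
    using assms(3,4) by (intro Q.integrable_const_bound[where B = B]) auto
  then show ?thesis
    unfolding gauss_pair_shift[OF assms(1,2)] using assms(3)
    by (subst (asm) integrable_density) (auto simp: measurable_cong_sets[OF sets_gauss_pair refl])
qed

text \<open>Neyman--Pearson: compare the test \<open>\<psi>\<close> with the likelihood-ratio test
  that rejects when the likelihood ratio \<open>L\<close> of the shifted Gaussian exceeds \<open>exp (t - V / 2)\<close>.\<close>
lemma gauss_pair_shift_test_bound:
  fixes d :: "'b::euclidean_space \<times> 'c::euclidean_space" and \<psi> :: "'b \<times> 'c \<Rightarrow> real"
  assumes "0 < s1" "0 < s2" "d \<noteq> 0"
    and [measurable]: "\<psi> \<in> borel_measurable borel" and \<psi>: "\<And>x. 0 \<le> \<psi> x \<and> \<psi> x \<le> 1"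
  defines "N \<equiv> gauss_vec s1 \<Otimes>\<^sub>M gauss_vec s2" and "V \<equiv> mahalanobis_inner s1 s2 d d"
  shows "(\<integral>x. \<psi> (d + x) \<partial>N)
    \<le> exp (t - V / 2) * (\<integral>x. \<psi> x \<partial>N) + (1 - Phi ((t - V) / sqrt V))
      - exp (t - V / 2) * (1 - Phi (t / sqrt V))"
proof -
  define W where "W = mahalanobis_inner s1 s2 d"
  define L where "L x = exp (W x - V / 2)" for x
  define k where "k = exp (t - V / 2)"
  define R where "R = {x. t < W x}"
  interpret N: prob_space N
    unfolding N_def using assms(1,2) by (rule prob_space_gauss_pair)
  have [simp, measurable_cong]: "sets N = sets borel"
    by (simp add: N_def)
  have [measurable]: "R \<in> sets borel"
    unfolding R_def W_def by measurable
  have shift: "(\<integral>x. f (d + x) \<partial>N) = (\<integral>x. L x * f x \<partial>N)" if "f \<in> borel_measurable borel" for f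
    unfolding N_def L_def W_def V_def using assms(1,2) that by (rule integral_gauss_pair_shift)
  have "(\<integral>x. L x * indicator R x \<partial>N) = (\<integral>x. indicator R (d + x) \<partial>N)"
    using shift[of "indicator R"] by simp
  also have "\<dots> = 1 - Phi ((t - V) / sqrt V)"
    unfolding N_def R_def W_def V_def using assms(1-3) by (rule prob_shifted_mahalanobis_inner_greater)
  finally have LR: "(\<integral>x. L x * indicator R x \<partial>N) = 1 - Phi ((t - V) / sqrt V)" .
  have NR: "(\<integral>x. indicator R x \<partial>N) = 1 - Phi (t / sqrt V)"
    using prob_mahalanobis_inner_greater[OF assms(1-3)]
    by (simp add: R_def W_def V_def N_def space_pair_measure)
  have pointwise: "L x * \<psi> x \<le> k * \<psi> x + (L x * indicator R x - k * indicator R x)" for x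
  proof (cases "x \<in> R")
    case True
    then have "(L x - k) * \<psi> x \<le> (L x - k) * 1"
      using \<psi>[of x] by (intro mult_left_mono) (auto simp: R_def k_def L_def)
    then show ?thesis
      using True by (simp add: algebra_simps)
  next
    case False
    then show ?thesis
      using \<psi>[of x] by (auto simp: R_def k_def L_def intro!: mult_right_mono)
  qed
  have "integrable N \<psi>" "integrable N (indicator R :: _ \<Rightarrow> real)"
    using \<psi> by (auto intro!: N.integrable_const_bound[where B = 1])
  moreover have "integrable N (\<lambda>x. L x * \<psi> x)" "integrable N (\<lambda>x. L x * indicator R x)"
    unfolding N_def L_def W_def V_def using assms(1,2) \<psi>
    by (auto intro!: integrable_gauss_pair_shift[where B = 1])
  ultimately have "(\<integral>x. L x * \<psi> x \<partial>N) \<le> (\<integral>x. k * \<psi> x + (L x * indicator R x - k * indicator R x) \<partial>N)"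
    using pointwise by (intro integral_mono) auto
  also have "\<dots> = k * (\<integral>x. \<psi> x \<partial>N) + ((\<integral>x. L x * indicator R x \<partial>N) - k * (\<integral>x. indicator R x \<partial>N))"
    using \<open>integrable N \<psi>\<close> \<open>integrable N (indicator R)\<close> \<open>integrable N (\<lambda>x. L x * indicator R x)\<close>
    by (simp add: integral_add integral_diff)
  finally have "(\<integral>x. L x * \<psi> x \<partial>N) \<le> k * (\<integral>x. \<psi> x \<partial>N) + (1 - Phi ((t - V) / sqrt V)) - k * (1 - Phi (t / sqrt V))"
    unfolding LR NR by simp
  then show ?thesis
    using shift[of \<psi>] by (simp add: k_def)
qed

lemma gauss_pair_shift_mixture_tradeoff:
  fixes s1 s2 :: real and d :: "'b::euclidean_space \<times> 'c::euclidean_space" and W :: "'w pmf"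
    and \<psi> :: "'w \<Rightarrow> 'b \<times> 'c \<Rightarrow> real"
  defines "N \<equiv> gauss_vec s1 \<Otimes>\<^sub>M gauss_vec s2"
  assumes "0 < s1" "0 < s2"
    and [measurable]: "\<And>w. \<psi> w \<in> borel_measurable borel" and \<psi>: "\<And>w x. 0 \<le> \<psi> w x \<and> \<psi> w x \<le> 1"
    and level: "(\<integral>w. (\<integral>x. \<psi> w x \<partial>N) \<partial>W) \<le> \<alpha>" and "\<alpha> \<le> 1"
  shows "(\<integral>w. (\<integral>x. \<psi> w (d + x) \<partial>N) \<partial>W) \<le> 1 - G_tradeoff (sqrt (mahalanobis_inner s1 s2 d d)) \<alpha>"
proof -
  define a where "a = (\<integral>w. (\<integral>x. \<psi> w x \<partial>N) \<partial>W)"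
  define e where "e = (\<integral>w. (\<integral>x. \<psi> w (d + x) \<partial>N) \<partial>W)"
  define V where "V = mahalanobis_inner s1 s2 d d"
  interpret N: prob_space N
    unfolding N_def using assms(2,3) by (rule prob_space_gauss_pair)
  have [simp, measurable_cong]: "sets N = sets borel"
    by (simp add: N_def)
  have shift_measurable[measurable]: "(\<lambda>x. \<psi> w (d + x)) \<in> borel_measurable borel" for w
    by (intro measurable_compose[OF _ assms(4)] borel_measurable_continuous_onI continuous_intros)
  have F: "0 \<le> (\<integral>x. \<psi> w x \<partial>N)" "(\<integral>x. \<psi> w x \<partial>N) \<le> 1" for w
    using \<psi> by (intro N.integral_unit_interval; simp)+
  have Fd: "0 \<le> (\<integral>x. \<psi> w (d + x) \<partial>N)" "(\<integral>x. \<psi> w (d + x) \<partial>N) \<le> 1" for w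
    using \<psi> by (intro N.integral_unit_interval; simp)+
  have "0 \<le> a" "e \<le> 1"
    unfolding a_def e_def using F Fd by (intro measure_pmf.integral_unit_interval; simp)+
  show ?thesis
  proof (cases "d = 0")
    case True
    then have "V = 0" "e = a"
      by (simp_all add: V_def e_def a_def mahalanobis_inner_def)
    then show ?thesis
      using level \<open>0 \<le> a\<close> \<open>\<alpha> \<le> 1\<close>
      unfolding V_def[symmetric] a_def[symmetric] e_def[symmetric] by (simp add: G_tradeoff_0)
  next
    case False
    have "e \<le> exp (t - V / 2) * a + (1 - Phi ((t - V) / sqrt V)) - exp (t - V / 2) * (1 - Phi (t / sqrt V))"
      for t
    proof -
      define k where "k = exp (t - V / 2)"
      define c where "c = (1 - Phi ((t - V) / sqrt V)) - k * (1 - Phi (t / sqrt V))"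
      have integrable: "integrable W (\<lambda>w. \<integral>x. \<psi> w x \<partial>N)" "integrable W (\<lambda>w. \<integral>x. \<psi> w (d + x) \<partial>N)"
        using F Fd by (auto intro!: measure_pmf.integrable_const_bound[where B = 1])
      have "(\<integral>x. \<psi> w (d + x) \<partial>N) \<le> k * (\<integral>x. \<psi> w x \<partial>N) + c" for w
        using gauss_pair_shift_test_bound[OF assms(2,3) False assms(4) \<psi>, of w t]
        by (simp add: N_def V_def k_def c_def)
      then have "e \<le> (\<integral>w. k * (\<integral>x. \<psi> w x \<partial>N) + c \<partial>W)"
        unfolding e_def using integrable by (intro integral_mono) auto
      also have "\<dots> = k * a + c"
        unfolding a_def using integrable(1) by simp
      finally show ?thesis
        by (simp add: k_def c_def)
    qed
    then have "e \<le> 1 - G_tradeoff (sqrt V) \<alpha>"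
      using mahalanobis_inner_self_pos[OF assms(2,3) False] \<open>0 \<le> a\<close> \<open>e \<le> 1\<close> level \<open>\<alpha> \<le> 1\<close>
      by (intro le_1_minus_G_tradeoff_if_threshold_bounds) (auto simp: V_def a_def)
    then show ?thesis
      by (simp add: V_def e_def)
  qed
qed

section \<open>Poisson subsampling\<close>

definition shift_index :: "nat \<Rightarrow> nat \<Rightarrow> nat" where
  "shift_index j i = (if i < j then i else Suc i)"

definition insert_index :: "nat \<Rightarrow> bool \<Rightarrow> nat set \<Rightarrow> nat set" where
  "insert_index j b I = shift_index j ` I \<union> (if b then {j} else {})"

lemma inj_shift_index: "inj (shift_index j)"
  by (auto simp: inj_on_def shift_index_def split: if_splits)

lemma shift_index_surj:
  assumes "i \<noteq> j"
  shows "shift_index j (if i < j then i else i - 1) = i"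
  using assms by (auto simp: shift_index_def)

lemma bij_betw_shift_index:
  assumes "j \<le> n"
  shows "bij_betw (shift_index j) {..<n} ({..<Suc n} - {j})"
proof (rule bij_betw_imageI)
  show "inj_on (shift_index j) {..<n}"
    using inj_shift_index by (rule inj_on_subset) simp
  have "i \<in> shift_index j ` {..<n}" if "i < Suc n" "i \<noteq> j" for i
    using that assms shift_index_surj[OF \<open>i \<noteq> j\<close>]
    by (intro image_eqI[of _ _ "if i < j then i else i - 1"]) auto
  then show "shift_index j ` {..<n} = {..<Suc n} - {j}"
    using assms by (auto simp: shift_index_def)
qed

lemma Collect_fun_upd_eq_insert_index:
  assumes "j \<le> n"
  shows "{i. i < Suc n \<and> (g(j := b)) i} = insert_index j b {i. i < n \<and> g (shift_index j i)}"
proof (intro set_eqI iffI)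
  fix i assume i: "i \<in> {i. i < Suc n \<and> (g(j := b)) i}"
  show "i \<in> insert_index j b {i. i < n \<and> g (shift_index j i)}"
  proof (cases "i = j")
    case False
    then have "i = shift_index j (if i < j then i else i - 1)" "(if i < j then i else i - 1) < n"
      using i assms by (auto simp: shift_index_surj)
    then show ?thesis
      using i False by (auto simp: insert_index_def intro!: image_eqI)
  qed (use i in \<open>auto simp: insert_index_def\<close>)
qed (use assms in \<open>auto simp: insert_index_def shift_index_def split: if_splits\<close>)

lemma poisson_sample_Suc:
  assumes "j \<le> n"
  shows "poisson_sample p (Suc n) =
    bind_pmf (bernoulli_pmf p) (\<lambda>b. map_pmf (insert_index j b) (poisson_sample p n))"
proof -
  define B where "B = {..<Suc n} - {j}"
  let ?P = "\<lambda>A. Pi_pmf A False (\<lambda>_::nat. bernoulli_pmf p)"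
  have P_n: "?P {..<n} = map_pmf (\<lambda>g. g \<circ> shift_index j) (?P B)"
    using assms bij_betw_shift_index[OF assms]
    by (intro Pi_pmf_bij_betw) (auto simp: B_def shift_index_def)
  have "{..<Suc n} = insert j B" "finite B" "j \<notin> B"
    using assms by (auto simp: B_def)
  then have "poisson_sample p (Suc n) =
      bind_pmf (bernoulli_pmf p) (\<lambda>b. map_pmf (\<lambda>g. {i. i < Suc n \<and> (g(j := b)) i}) (?P B))"
    by (simp add: poisson_sample_def Pi_pmf_insert' map_bind_pmf map_pmf_def[symmetric] pmf.map_comp o_def)
  also have "\<dots> = bind_pmf (bernoulli_pmf p)
      (\<lambda>b. map_pmf (\<lambda>g. insert_index j b {i. i < n \<and> g (shift_index j i)}) (?P B))"
    by (simp only: Collect_fun_upd_eq_insert_index[OF assms])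
  also have "\<dots> = bind_pmf (bernoulli_pmf p) (\<lambda>b. map_pmf (insert_index j b) (poisson_sample p n))"
    by (simp add: poisson_sample_def P_n pmf.map_comp o_def)
  finally show ?thesis .
qed

definition subsample_sum :: "real \<Rightarrow> ('a \<Rightarrow> 'v::comm_monoid_add) \<Rightarrow> 'a list \<Rightarrow> 'v pmf" where
  "subsample_sum p v D = map_pmf (\<lambda>I. \<Sum>i\<in>I. v (D ! i)) (poisson_sample p (length D))"

lemma subsample_sum_insert:
  fixes v :: "'a \<Rightarrow> 'v::comm_monoid_add"
  shows "subsample_sum p v (as @ z # bs) =
    bind_pmf (bernoulli_pmf p) (\<lambda>b. map_pmf (\<lambda>w. if b then w + v z else w) (subsample_sum p v (as @ bs)))"
proof -
  let ?j = "length as"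
  have sum_insert_index: "(\<Sum>i\<in>insert_index ?j b I. v ((as @ z # bs) ! i))
      = (if b then (\<Sum>i\<in>I. v ((as @ bs) ! i)) + v z else (\<Sum>i\<in>I. v ((as @ bs) ! i)))"
    if "finite I" for b I
  proof -
    have "(\<Sum>i\<in>shift_index ?j ` I. v ((as @ z # bs) ! i)) = (\<Sum>i\<in>I. v ((as @ z # bs) ! shift_index ?j i))"
      using sum.reindex[OF inj_on_subset[OF inj_shift_index subset_UNIV]] by (simp only: comp_def) blast
    also have "\<dots> = (\<Sum>i\<in>I. v ((as @ bs) ! i))"
      by (intro sum.cong) (auto simp: nth_append shift_index_def)
    finally have image: "(\<Sum>i\<in>shift_index ?j ` I. v ((as @ z # bs) ! i)) = (\<Sum>i\<in>I. v ((as @ bs) ! i))" .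
    have "?j \<notin> shift_index ?j ` I"
      by (auto simp: shift_index_def)
    then show ?thesis
      using that by (cases b) (simp_all add: insert_index_def image add.commute)
  qed
  have "subsample_sum p v (as @ z # bs)
      = map_pmf (\<lambda>I. \<Sum>i\<in>I. v ((as @ z # bs) ! i)) (poisson_sample p (Suc (length (as @ bs))))"
    by (simp add: subsample_sum_def)
  also have "\<dots> = bind_pmf (bernoulli_pmf p) (\<lambda>b. map_pmf (\<lambda>I. \<Sum>i\<in>insert_index ?j b I. v ((as @ z # bs) ! i))
      (poisson_sample p (length (as @ bs))))"
    by (simp add: poisson_sample_Suc[of ?j] map_bind_pmf pmf.map_comp o_def)
  also have "\<dots> = bind_pmf (bernoulli_pmf p) (\<lambda>b. map_pmf (\<lambda>I. if b then (\<Sum>i\<in>I. v ((as @ bs) ! i)) + v z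
      else (\<Sum>i\<in>I. v ((as @ bs) ! i))) (poisson_sample p (length (as @ bs))))"
    by (intro bind_pmf_cong refl map_pmf_cong) (auto simp: poisson_sample_def sum_insert_index)
  finally show ?thesis
    by (simp add: subsample_sum_def pmf.map_comp o_def if_distrib)
qed

lemma integral_bind_pmf_bounded:
  fixes f :: "'b \<Rightarrow> real"
  assumes "\<And>x. \<bar>f x\<bar> \<le> B"
  shows "(\<integral>x. f x \<partial>bind_pmf A K) = (\<integral>a. (\<integral>x. f x \<partial>K a) \<partial>A)"
  unfolding measure_pmf_bind
  using assms
  by (intro integral_bind[where K = "count_space UNIV" and B = B and B' = 1])
    (auto simp: measure_pmf_in_subprob_space measure_pmf.emeasure_space_1
      intro: prob_space.finite_measure[OF measure_pmf.prob_space_axioms])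

lemma integral_subsample_sum_insert:
  fixes v :: "'a \<Rightarrow> 'v::comm_monoid_add" and F :: "'v \<Rightarrow> real"
  assumes "0 \<le> p" "p \<le> 1" "\<And>w. \<bar>F w\<bar> \<le> B"
  shows "(\<integral>w. F w \<partial>subsample_sum p v (as @ z # bs)) =
    p * (\<integral>w. F (w + v z) \<partial>subsample_sum p v (as @ bs)) + (1 - p) * (\<integral>w. F w \<partial>subsample_sum p v (as @ bs))"
  using assms by (simp add: subsample_sum_insert integral_bind_pmf_bounded[where B = B] mult.commute)

section \<open>One step of DPFMix\<close>

definition clip_record :: "('a \<Rightarrow> 'b::euclidean_space) \<Rightarrow> real \<Rightarrow> real \<Rightarrow> 'a \<times> 'c \<Rightarrow> 'b \<times> 'c::euclidean_space" where
  "clip_record f1 Cx Cy r = (clip Cx (f1 (fst r)), clip Cy (snd r))"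

lemma norm_clip_le: "0 < C \<Longrightarrow> norm (clip C v) \<le> C"
  by (cases "norm v \<le> C") (auto simp: clip_def max_def field_simps)

lemma mahalanobis_inner_clip_record_le:
  fixes f1 :: "'a \<Rightarrow> 'b::euclidean_space" and r :: "'a \<times> 'c::euclidean_space"
  assumes "1 \<le> m" "0 < Cx" "0 < Cy" "0 < \<sigma>x" "0 < \<sigma>y"
  defines "d \<equiv> (1 / real m) *\<^sub>R clip_record f1 Cx Cy r"
  shows "mahalanobis_inner (Cx * \<sigma>x / m) (Cy * \<sigma>y / m) d d \<le> 1 / \<sigma>x\<^sup>2 + 1 / \<sigma>y\<^sup>2"
proof -
  have "norm (fst d) \<le> Cx / m" "norm (snd d) \<le> Cy / m"
    using assms by (auto simp: d_def clip_record_def norm_clip_le divide_right_mono)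
  then have "mahalanobis_inner (Cx * \<sigma>x / m) (Cy * \<sigma>y / m) d d
      \<le> ((Cx / m) / (Cx * \<sigma>x / m))\<^sup>2 + ((Cy / m) / (Cy * \<sigma>y / m))\<^sup>2"
    using assms by (intro mahalanobis_inner_self_le) auto
  also have "\<dots> = 1 / \<sigma>x\<^sup>2 + 1 / \<sigma>y\<^sup>2"
    using assms by (simp add: power_divide)
  finally show ?thesis .
qed

lemma dpfmix_step_eq_distr_shift:
  "dpfmix_step f1 m Cx Cy \<sigma>x \<sigma>y D I =
    distr (gauss_vec (Cx * \<sigma>x / m) \<Otimes>\<^sub>M gauss_vec (Cy * \<sigma>y / m)) borel
      ((+) ((1 / real m) *\<^sub>R (\<Sum>i\<in>I. clip_record f1 Cx Cy (D ! i))))"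
  unfolding dpfmix_step_def
  by (intro distr_cong refl) (auto simp: clip_record_def fst_sum snd_sum prod_eq_iff)

lemma sets_dpfmix_subsampled[simp, measurable_cong]:
  "sets (dpfmix_subsampled f1 m n Cx Cy \<sigma>x \<sigma>y D) = sets borel"
  unfolding dpfmix_subsampled_def
  by (subst sets_bind[where N = borel]) (auto simp: dpfmix_step_eq_distr_shift)

lemma integral_dpfmix_subsampled:
  fixes f1 :: "'a \<Rightarrow> 'b::euclidean_space" and D :: "('a \<times> 'c::euclidean_space) list" and m n :: nat
    and \<phi> :: "'b \<times> 'c \<Rightarrow> real"
  assumes "0 < Cx * \<sigma>x / m" "0 < Cy * \<sigma>y / m"
    and [measurable]: "\<phi> \<in> borel_measurable borel" and \<phi>: "\<And>x. 0 \<le> \<phi> x \<and> \<phi> x \<le> 1"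
  shows "(\<integral>x. \<phi> x \<partial>dpfmix_subsampled f1 m n Cx Cy \<sigma>x \<sigma>y D) =
    (\<integral>w. (\<integral>x. \<phi> ((1 / real m) *\<^sub>R w + x) \<partial>gauss_vec (Cx * \<sigma>x / m) \<Otimes>\<^sub>M gauss_vec (Cy * \<sigma>y / m))
       \<partial>measure_pmf (subsample_sum (real m / real n) (clip_record f1 Cx Cy) D))"
proof -
  let ?N = "gauss_vec (Cx * \<sigma>x / m) \<Otimes>\<^sub>M gauss_vec (Cy * \<sigma>y / m) :: ('b \<times> 'c) measure"
  have "prob_space ?N"
    using assms(1,2) by (rule prob_space_gauss_pair)
  then have step: "dpfmix_step f1 m Cx Cy \<sigma>x \<sigma>y D I \<in> space (subprob_algebra borel)" for I
    unfolding dpfmix_step_eq_distr_shift space_subprob_algebra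
    by (auto intro!: prob_space_imp_subprob_space prob_space.prob_space_distr)
  have "(\<integral>x. \<phi> x \<partial>dpfmix_subsampled f1 m n Cx Cy \<sigma>x \<sigma>y D)
     = (\<integral>I. (\<integral>x. \<phi> x \<partial>dpfmix_step f1 m Cx Cy \<sigma>x \<sigma>y D I) \<partial>poisson_sample (real m / real n) (length D))"
    unfolding dpfmix_subsampled_def
    by (rule integral_bind[where K = borel and B = 1 and B' = 1])
      (use \<phi> step in \<open>auto intro: prob_space.finite_measure[OF measure_pmf.prob_space_axioms]
        simp: space_subprob_algebra subprob_space.subprob_emeasure_le_1\<close>)
  also have "\<dots> = (\<integral>w. (\<integral>x. \<phi> ((1 / real m) *\<^sub>R w + x) \<partial>?N) \<partial>subsample_sum (real m / real n) (clip_record f1 Cx Cy) D)"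
    by (simp add: subsample_sum_def dpfmix_step_eq_distr_shift integral_distr)
  finally show ?thesis .
qed

lemma dpfmix_subsampled_test_bound:
  fixes f1 :: "'a \<Rightarrow> 'b::euclidean_space" and as bs :: "('a \<times> 'c::euclidean_space) list"
    and \<phi> :: "'b \<times> 'c \<Rightarrow> real"
  assumes "1 \<le> m" "m \<le> n" "0 < Cx" "0 < Cy" "0 < \<sigma>x" "0 < \<sigma>y"
    and [measurable]: "\<phi> \<in> borel_measurable borel" and \<phi>: "\<And>x. 0 \<le> \<phi> x \<and> \<phi> x \<le> 1"
    and level: "(\<integral>x. \<phi> x \<partial>dpfmix_subsampled f1 m n Cx Cy \<sigma>x \<sigma>y (as @ bs)) \<le> \<alpha>" and "\<alpha> \<le> 1"
  shows "(\<integral>x. \<phi> x \<partial>dpfmix_subsampled f1 m n Cx Cy \<sigma>x \<sigma>y (as @ z # bs))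
    \<le> real m / real n * (1 - G_tradeoff (sqrt (1 / \<sigma>x\<^sup>2 + 1 / \<sigma>y\<^sup>2)) \<alpha>)
      + (1 - real m / real n) * (\<integral>x. \<phi> x \<partial>dpfmix_subsampled f1 m n Cx Cy \<sigma>x \<sigma>y (as @ bs))"
proof -
  define p where "p = real m / real n"
  define s1 where "s1 = Cx * \<sigma>x / m"
  define s2 where "s2 = Cy * \<sigma>y / m"
  define N where "N = (gauss_vec s1 \<Otimes>\<^sub>M gauss_vec s2 :: ('b \<times> 'c) measure)"
  define v where "v = (clip_record f1 Cx Cy :: 'a \<times> 'c \<Rightarrow> 'b \<times> 'c)"
  define W where "W = subsample_sum p v (as @ bs)"
  define \<psi> where "\<psi> w x = \<phi> ((1 / real m) *\<^sub>R w + x)" for w x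
  define d where "d = (1 / real m) *\<^sub>R v z"
  have "0 < s1" "0 < s2" "0 \<le> p" "p \<le> 1"
    using assms by (auto simp: s1_def s2_def p_def)
  interpret N: prob_space N
    unfolding N_def using \<open>0 < s1\<close> \<open>0 < s2\<close> by (rule prob_space_gauss_pair)
  have [measurable]: "\<psi> w \<in> borel_measurable borel" for w
    unfolding \<psi>_def by (intro measurable_compose[OF _ assms(7)] borel_measurable_continuous_onI continuous_intros)
  have \<psi>: "0 \<le> \<psi> w x \<and> \<psi> w x \<le> 1" for w x
    using \<phi> by (simp add: \<psi>_def)
  have F: "\<bar>\<integral>x. \<psi> w x \<partial>N\<bar> \<le> 1" for w
    using N.integral_unit_interval[of "\<psi> w"] \<psi> by (simp add: sets_eq_imp_space_eq N_def)
  have E: "(\<integral>x. \<phi> x \<partial>dpfmix_subsampled f1 m n Cx Cy \<sigma>x \<sigma>y D) = (\<integral>w. (\<integral>x. \<psi> w x \<partial>N) \<partial>subsample_sum p v D)"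
    for D :: "('a \<times> 'c) list"
    using \<open>0 < s1\<close> \<open>0 < s2\<close> \<phi>
    unfolding N_def s1_def s2_def p_def v_def \<psi>_def by (intro integral_dpfmix_subsampled) auto
  have "(\<integral>w. (\<integral>x. \<psi> (w + v z) x \<partial>N) \<partial>W) = (\<integral>w. (\<integral>x. \<psi> w (d + x) \<partial>N) \<partial>W)"
    by (simp add: \<psi>_def d_def scaleR_add_right add.assoc)
  also have "\<dots> \<le> 1 - G_tradeoff (sqrt (mahalanobis_inner s1 s2 d d)) \<alpha>"
    using level \<open>\<alpha> \<le> 1\<close> \<psi> unfolding E W_def N_def
    by (intro gauss_pair_shift_mixture_tradeoff \<open>0 < s1\<close> \<open>0 < s2\<close>) auto
  also have "\<dots> \<le> 1 - G_tradeoff (sqrt (1 / \<sigma>x\<^sup>2 + 1 / \<sigma>y\<^sup>2)) \<alpha>"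
    using mahalanobis_inner_clip_record_le[of m Cx Cy \<sigma>x \<sigma>y f1 z] assms
    by (simp add: G_tradeoff_antimono s1_def s2_def d_def v_def)
  finally have "p * (\<integral>w. (\<integral>x. \<psi> (w + v z) x \<partial>N) \<partial>W) \<le> p * (1 - G_tradeoff (sqrt (1 / \<sigma>x\<^sup>2 + 1 / \<sigma>y\<^sup>2)) \<alpha>)"
    using \<open>0 \<le> p\<close> by (rule mult_left_mono)
  moreover have "(\<integral>w. (\<integral>x. \<psi> w x \<partial>N) \<partial>subsample_sum p v (as @ z # bs))
      = p * (\<integral>w. (\<integral>x. \<psi> (w + v z) x \<partial>N) \<partial>W) + (1 - p) * (\<integral>w. (\<integral>x. \<psi> w x \<partial>N) \<partial>W)"
    unfolding W_def using \<open>0 \<le> p\<close> \<open>p \<le> 1\<close> F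
    by (rule integral_subsample_sum_insert[where F = "\<lambda>w. \<integral>x. \<psi> w x \<partial>N" and B = 1])
  ultimately show ?thesis
    unfolding E p_def[symmetric] W_def[symmetric] by simp
qed

theorem mainTheorem2:
  fixes f1 :: "'a \<Rightarrow> 'b::euclidean_space"
    and as bs :: "('a \<times> 'c::euclidean_space) list" and z :: "'a \<times> 'c"
    and m n :: nat and Cx Cy \<sigma>x \<sigma>y :: real
  assumes "1 \<le> m" "m \<le> n"
    and "Cx > 0" "Cy > 0" "\<sigma>x > 0" "\<sigma>y > 0"
    and "S = as @ bs" "S' = as @ z # bs"
    and "0 \<le> \<alpha>" "\<alpha> \<le> 1"
  shows "tradeoff (dpfmix_subsampled f1 m n Cx Cy \<sigma>x \<sigma>y S) (dpfmix_subsampled f1 m n Cx Cy \<sigma>x \<sigma>y S') \<alpha>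
         \<ge> (real m / real n) * G_tradeoff (sqrt (1 / \<sigma>x\<^sup>2 + 1 / \<sigma>y\<^sup>2)) \<alpha>
           + (1 - real m / real n) * (1 - \<alpha>)"
proof (rule tradeoff_geI[OF \<open>0 \<le> \<alpha>\<close>])
  fix \<phi> assume "\<phi> \<in> borel_measurable (dpfmix_subsampled f1 m n Cx Cy \<sigma>x \<sigma>y S)"
    and \<phi>: "\<And>x. 0 \<le> \<phi> x \<and> \<phi> x \<le> 1"
    and level: "(\<integral>x. \<phi> x \<partial>dpfmix_subsampled f1 m n Cx Cy \<sigma>x \<sigma>y S) \<le> \<alpha>"
  then have "\<phi> \<in> borel_measurable borel"
    by (simp add: measurable_cong_sets[OF sets_dpfmix_subsampled refl])
  then have "(\<integral>x. \<phi> x \<partial>dpfmix_subsampled f1 m n Cx Cy \<sigma>x \<sigma>y S')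
      \<le> real m / real n * (1 - G_tradeoff (sqrt (1 / \<sigma>x\<^sup>2 + 1 / \<sigma>y\<^sup>2)) \<alpha>)
        + (1 - real m / real n) * (\<integral>x. \<phi> x \<partial>dpfmix_subsampled f1 m n Cx Cy \<sigma>x \<sigma>y S)"
    using assms \<phi> level unfolding assms(7,8) by (intro dpfmix_subsampled_test_bound) auto
  moreover have "(1 - real m / real n) * (\<integral>x. \<phi> x \<partial>dpfmix_subsampled f1 m n Cx Cy \<sigma>x \<sigma>y S)
      \<le> (1 - real m / real n) * \<alpha>"
    using assms level by (intro mult_left_mono) auto
  ultimately show "(real m / real n) * G_tradeoff (sqrt (1 / \<sigma>x\<^sup>2 + 1 / \<sigma>y\<^sup>2)) \<alpha> + (1 - real m / real n) * (1 - \<alpha>)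
      \<le> 1 - (\<integral>x. \<phi> x \<partial>dpfmix_subsampled f1 m n Cx Cy \<sigma>x \<sigma>y S')"
    by (simp only: ring_distribs)
qed

end
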